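(* Let $d\ge1$, let $\mathcal{F}=\{1,\dots,d\}$ be partitioned into sets $\mathcal{D}$ (desirable features) and $\mathcal{U}$ (undesirable features), let $c\in\mathbb{R}^d$ with $c_f>0$ for all $f$, let $\mathbb{C}\in\mathbb{R}^{d\times d}$ be the contribution matrix of a causal graph and $h_0\in\mathbb{R}^d$ a classifier with $\mathbb{C}h_0\ge0$ componentwise, and let $\alpha>0$. Consider the agent's problem $$\min_{e\in\mathbb{R}^d,\ e\ge 0}\ c^\top e\quad\text{s.t.}\quad (\mathbb{C}h_0)^\top e\ge\alpha .$$ If there exists $f^\star\in\mathcal{D}$ such that $$\max_{f\in\mathcal{U}}\frac{(\mathbb{C}h_0)_f}{c_f}<\frac{(\mathbb{C}h_0)_{f^\star}}{c_{f^\star}},$$ then every optimal solution (best response) of this problem is a $\beta$-desirable effort profile for every $\beta\in(0,1]$.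
   Context: A causal graph is a weighted directed acyclic graph on $\mathcal{F}$ with adjacency matrix $A$ ($A_{ij}$ the weight of edge $i\to j$, $0$ if absent); its contribution matrix is $\mathbb{C}=\sum_{k=0}^{d}A^k$. The maximum over an empty set is $-\infty$. For $\beta\in(0,1]$, an effort profile $e\in\mathbb{R}^d$ is $\beta$-desirable if $\|e_{\mathcal{D}}\|_2\ge\beta\|e\|_2$, where $e_{\mathcal{D}}$ is the vector of coordinates of $e$ indexed by $\mathcal{D}$. *)

theory Defs
  imports "HOL-Analysis.Analysis"
begin

text \<open>Features are the elements of a finite type 'n (so d = CARD('n)).
  A causal graph is given by its weighted adjacency matrix A, where A $ i $ j is the
  weight of the edge i -> j (0 if absent); the graph must be acyclic.\<close>

definition causal_graph :: "real^'n^'n \<Rightarrow> bool" where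
  "causal_graph A \<longleftrightarrow> acyclic {(i, j). A $ i $ j \<noteq> 0}"

primrec mat_pow :: "real^'n^'n \<Rightarrow> nat \<Rightarrow> real^'n^'n" where
  "mat_pow A 0 = mat 1"
| "mat_pow A (Suc k) = A ** mat_pow A k"

definition contribution_matrix :: "real^'n^'n \<Rightarrow> real^'n^'n" where
  "contribution_matrix A = (\<Sum>k\<in>{0..CARD('n)}. mat_pow A k)"

definition beta_desirable :: "'n set \<Rightarrow> real \<Rightarrow> real^'n \<Rightarrow> bool" where
  "beta_desirable D \<beta> e \<longleftrightarrow> L2_set (\<lambda>i. e $ i) D \<ge> \<beta> * norm e"

definition agent_feasible :: "real^'n^'n \<Rightarrow> real^'n \<Rightarrow> real \<Rightarrow> real^'n \<Rightarrow> bool" where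
  "agent_feasible C h0 \<alpha> e \<longleftrightarrow> (\<forall>i. e $ i \<ge> 0) \<and> (C *v h0) \<bullet> e \<ge> \<alpha>"

definition best_response :: "real^'n \<Rightarrow> real^'n^'n \<Rightarrow> real^'n \<Rightarrow> real \<Rightarrow> real^'n \<Rightarrow> bool" where
  "best_response c C h0 \<alpha> e \<longleftrightarrow> agent_feasible C h0 \<alpha> e \<and>
     (\<forall>e'. agent_feasible C h0 \<alpha> e' \<longrightarrow> c \<bullet> e \<le> c \<bullet> e')"

end

theory Submission
  imports Defs
begin

text \<open>If some desirable feature f has a strictly better return-to-cost ratio
  (C h0)_f / c_f than every undesirable feature, then an optimal effort profile puts no
  effort on undesirable features: moving the effort e_u of an undesirable feature u to f,
  scaled so that the score (C h0) \<bullet> e is unchanged, keeps the profile feasible and strictly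
  lowers its cost. An effort profile supported on D has all its norm on D, hence is
  \<beta>-desirable for every \<beta> \<le> 1.\<close>

lemma best_response_vanishes_on_dominated_feature:
  assumes br: "best_response c C h0 \<alpha> e"
    and cost_pos: "c $ u > 0" "c $ f > 0"
    and score_nonneg: "(C *v h0) $ u \<ge> 0"
    and ratio: "(C *v h0) $ u / c $ u < (C *v h0) $ f / c $ f"
  shows "e $ u = 0"
proof (rule ccontr)
  define v where "v = C *v h0"
  have e_nonneg: "\<forall>i. e $ i \<ge> 0" and score: "v \<bullet> e \<ge> \<alpha>"
    and optimal: "\<And>e'. agent_feasible C h0 \<alpha> e' \<Longrightarrow> c \<bullet> e \<le> c \<bullet> e'"
    using br unfolding best_response_def agent_feasible_def v_def by auto
  assume "e $ u \<noteq> 0"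
  with e_nonneg have eu_pos: "e $ u > 0" by (metis less_eq_real_def)
  have vu: "v $ u \<ge> 0" and ratio_v: "v $ u / c $ u < v $ f / c $ f"
    using score_nonneg ratio by (simp_all add: v_def)
  then have "u \<noteq> f" by auto
  have vf_pos: "v $ f > 0"
  proof -
    have "0 \<le> v $ u / c $ u" using vu cost_pos by simp
    with ratio_v have "0 < v $ f / c $ f" by linarith
    with cost_pos show ?thesis by (simp add: zero_less_divide_iff)
  qed
  have cross: "c $ f * v $ u < c $ u * v $ f"
    using ratio_v cost_pos by (simp add: field_simps)
  define t where "t = e $ u * v $ u / v $ f"
  define e' where "e' = e + (- e $ u) *\<^sub>R axis u 1 + t *\<^sub>R axis f 1"
  have "t \<ge> 0" unfolding t_def using eu_pos vu vf_pos by simp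
  then have "\<forall>i. e' $ i \<ge> 0"
    using e_nonneg \<open>u \<noteq> f\<close> by (simp add: e'_def axis_def)
  moreover have "v \<bullet> e' = v \<bullet> e"
    using vf_pos by (simp add: e'_def inner_add_right inner_diff_right inner_axis t_def)
  ultimately have "agent_feasible C h0 \<alpha> e'"
    using score by (simp add: agent_feasible_def v_def)
  then have "c \<bullet> e \<le> c \<bullet> e'" by (rule optimal)
  moreover have "t * c $ f < e $ u * c $ u"
  proof -
    have "t * c $ f * v $ f = e $ u * (c $ f * v $ u)" unfolding t_def using vf_pos by simp
    also have "\<dots> < e $ u * (c $ u * v $ f)" using cross eu_pos by simp
    finally show ?thesis using vf_pos by (simp add: mult.assoc)
  qed
  ultimately show False by (simp add: e'_def inner_add_right inner_diff_right inner_axis)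
qed

lemma norm_vec_eq_L2_set_support:
  fixes e :: "real^'n"
  assumes "\<forall>i. i \<notin> D \<longrightarrow> e $ i = 0"
  shows "norm e = L2_set (\<lambda>i. e $ i) D"
proof -
  have "(\<Sum>i\<in>UNIV. (e $ i)\<^sup>2) = (\<Sum>i\<in>D. (e $ i)\<^sup>2)"
    using assms by (intro sum.mono_neutral_right) auto
  then show ?thesis by (simp add: norm_vec_def L2_set_def)
qed

lemma beta_desirable_if_support_subset:
  assumes "\<forall>i. i \<notin> D \<longrightarrow> e $ i = 0" and "\<beta> \<le> 1"
  shows "beta_desirable D \<beta> e"
  using norm_vec_eq_L2_set_support[OF assms(1)] mult_right_mono[OF assms(2) L2_set_nonneg]
  by (simp add: beta_desirable_def)

theorem theorem1:
  fixes D U :: "'n::finite set"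
    and c h0 :: "real^'n"
    and A :: "real^'n^'n"
    and \<alpha> :: real
  assumes partition: "D \<union> U = UNIV" "D \<inter> U = {}"
    and c_pos: "\<forall>f. c $ f > 0"
    and graph: "causal_graph A"
    and h0_nonneg: "\<forall>f. (contribution_matrix A *v h0) $ f \<ge> 0"
    and alpha_pos: "\<alpha> > 0"
    and fstar: "\<exists>fs\<in>D. \<forall>f\<in>U.
        (contribution_matrix A *v h0) $ f / c $ f < (contribution_matrix A *v h0) $ fs / c $ fs"
  shows "\<forall>e. best_response c (contribution_matrix A) h0 \<alpha> e \<longrightarrow>
           (\<forall>\<beta>. 0 < \<beta> \<and> \<beta> \<le> 1 \<longrightarrow> beta_desirable D \<beta> e)"
proof (intro allI impI)
  fix e and \<beta> :: real
  assume br: "best_response c (contribution_matrix A) h0 \<alpha> e" and "0 < \<beta> \<and> \<beta> \<le> 1"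
  obtain fs where "fs \<in> D" and dominates: "\<forall>f\<in>U.
      (contribution_matrix A *v h0) $ f / c $ f < (contribution_matrix A *v h0) $ fs / c $ fs"
    using fstar by blast
  have "e $ u = 0" if "u \<notin> D" for u
    using that partition(1) c_pos h0_nonneg dominates
    by (intro best_response_vanishes_on_dominated_feature[OF br, of u fs]) auto
  then show "beta_desirable D \<beta> e"
    using \<open>0 < \<beta> \<and> \<beta> \<le> 1\<close> by (intro beta_desirable_if_support_subset) auto
qed

end
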